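(* Fix an integer $k\ge 3$. For every $\varepsilon>0$ there exists $N$ such that for all $n\ge N$, every vector $k$-separating code $\mathcal C\subseteq (S^{k-1})^n$ of block length $n$ satisfies \[ \frac{\log_2|\mathcal C|}{n}\le \frac{k!}{k^{k-1}}+\varepsilon . \]
   Context: $S^{k-1}$ denotes the unit sphere in $\mathbb R^k$. A subset $\mathcal C\subseteq (S^{k-1})^n$ is vector $k$-separating if for any $k$ distinct codewords $c^{(1)},\dots,c^{(k)}\in\mathcal C$ there is a coordinate $i\in[n]$ such that the vectors $c^{(1)}_i,\dots,c^{(k)}_i$ are mutually orthogonal. *)

theory Defs
  imports "HOL-Analysis.Analysis"
begin

text \<open>A code of block length n over the unit sphere S^{k-1} of R^k (k = CARD('k)):
  codewords are functions on the coordinate set {..<n} (extensional, i.e. undefined outside)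
  whose values are unit vectors.\<close>
definition sphere_code :: "nat \<Rightarrow> (nat \<Rightarrow> real^'k) set \<Rightarrow> bool" where
  "sphere_code n C \<longleftrightarrow> C \<subseteq> PiE {..<n} (\<lambda>_. sphere 0 1)"

definition vector_k_separating :: "nat \<Rightarrow> (nat \<Rightarrow> real^'k) set \<Rightarrow> bool" where
  "vector_k_separating n C \<longleftrightarrow>
     (\<forall>S. S \<subseteq> C \<and> finite S \<and> card S = CARD('k) \<longrightarrow>
        (\<exists>i<n. \<forall>x\<in>S. \<forall>y\<in>S. x \<noteq> y \<longrightarrow> inner (x i) (y i) = 0))"

end

theory Submission
  imports Defs
begin

text \<open>Let \<open>M = card C\<close> and fix \<open>k - 2\<close> codewords \<open>X\<close>. At a coordinate \<open>i\<close>, the codewords whose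
  \<open>i\<close>-th entries are orthogonal to those of \<open>X\<close> have their \<open>i\<close>-th entries in a plane, so
  orthogonality among them is a matching of lines. Since any two further codewords are, together
  with \<open>X\<close>, mutually orthogonal at some coordinate, Hansel's lemma shows that these extensions of
  \<open>X\<close>, counted over all coordinates, number at least \<open>(M - k + 2) log\<^sub>2 (M - k + 2)\<close>. Summing
  over \<open>X\<close> counts every \<open>(k - 1)\<close>-clique of the orthogonality graph at each coordinate \<open>k - 1\<close>
  times; that graph has no \<open>(k + 1)\<close>-clique, so by Zykov's theorem it has at most
  \<open>k (M / k)\<^bsup>k - 1\<^esup>\<close> cliques of size \<open>k - 1\<close>. Hence
  \<open>(M choose (k - 1)) log\<^sub>2 (M - k + 2) \<le> n k (M / k)\<^bsup>k - 1\<^esup>\<close>, i.e.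
  \<open>log\<^sub>2 M \<le> n (k! / k\<^bsup>k - 1\<^esup> + o(1))\<close>.\<close>

definition cliques :: "('a \<Rightarrow> 'a \<Rightarrow> bool) \<Rightarrow> 'a set \<Rightarrow> nat \<Rightarrow> 'a set set" where
  "cliques R V t = {S. S \<subseteq> V \<and> card S = t \<and> pairwise R S}"

text \<open>The weights are only needed to make Zykov symmetrization an induction; in the end
  \<open>p = (\<lambda>_. 1)\<close>, which counts cliques.\<close>

definition clique_weight :: "('a \<Rightarrow> 'a \<Rightarrow> bool) \<Rightarrow> ('a \<Rightarrow> real) \<Rightarrow> 'a set \<Rightarrow> nat \<Rightarrow> real" where
  "clique_weight R p V t = (\<Sum>S\<in>cliques R V t. \<Prod>v\<in>S. p v)"

lemma finite_cliques: "finite V \<Longrightarrow> finite (cliques R V t)"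
  unfolding cliques_def by (rule finite_subset[of _ "Pow V"]) auto

lemma clique_weight_0: "finite V \<Longrightarrow> clique_weight R p V 0 = 1"
proof -
  assume "finite V"
  then have "cliques R V 0 = {{}}"
    unfolding cliques_def by (auto dest: finite_subset)
  then show ?thesis by (simp add: clique_weight_def)
qed

lemma clique_weight_empty: "clique_weight R p {} (Suc t) = 0"
  unfolding clique_weight_def cliques_def by auto

lemma clique_weight_cong:
  "(\<And>x. x \<in> V \<Longrightarrow> p x = q x) \<Longrightarrow> clique_weight R p V t = clique_weight R q V t"
  unfolding clique_weight_def cliques_def by (rule sum.cong) (auto intro!: prod.cong)

lemma card_cliques: "card (cliques R V t) = clique_weight R (\<lambda>_. 1) V t"
  by (simp add: clique_weight_def)

lemma cliques_insert:
  assumes sym: "\<And>x y. R x y = R y x" and fin: "finite W" and w: "w \<notin> W"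
  shows "cliques R (insert w W) (Suc t)
    = cliques R W (Suc t) \<union> insert w ` cliques R {x\<in>W. R w x} t"
proof (rule set_eqI, rule iffI)
  fix S assume S: "S \<in> cliques R (insert w W) (Suc t)"
  show "S \<in> cliques R W (Suc t) \<union> insert w ` cliques R {x\<in>W. R w x} t"
  proof (cases "w \<in> S")
    case False
    then show ?thesis using S by (auto simp: cliques_def)
  next
    case True
    have "finite S" using S fin by (auto simp: cliques_def intro: finite_subset)
    then have "S - {w} \<in> cliques R {x\<in>W. R w x} t"
      using S True unfolding cliques_def pairwise_def by auto
    moreover have "S = insert w (S - {w})" using True by auto
    ultimately show ?thesis by blast
  qed
next
  fix S assume "S \<in> cliques R W (Suc t) \<union> insert w ` cliques R {x\<in>W. R w x} t"
  then show "S \<in> cliques R (insert w W) (Suc t)"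
  proof
    assume "S \<in> cliques R W (Suc t)"
    then show ?thesis by (auto simp: cliques_def)
  next
    assume "S \<in> insert w ` cliques R {x\<in>W. R w x} t"
    then obtain S' where S': "S' \<in> cliques R {x\<in>W. R w x} t" "S = insert w S'" by auto
    have "finite S'" "w \<notin> S'" using S' fin w by (auto simp: cliques_def intro: finite_subset)
    then show ?thesis using S' sym unfolding cliques_def pairwise_def by auto
  qed
qed

lemma clique_weight_insert:
  assumes sym: "\<And>x y. R x y = R y x" and fin: "finite W" and w: "w \<notin> W"
  shows "clique_weight R p (insert w W) (Suc t)
    = clique_weight R p W (Suc t) + p w * clique_weight R p {x\<in>W. R w x} t"
proof -
  let ?N = "cliques R {x\<in>W. R w x} t"
  have disj: "cliques R W (Suc t) \<inter> insert w ` ?N = {}"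
    using w by (auto simp: cliques_def)
  have notin: "w \<notin> S" "finite S" if "S \<in> ?N" for S
    using that w fin by (auto simp: cliques_def intro: finite_subset)
  have inj: "inj_on (insert w) ?N"
    by (rule inj_onI) (metis notin(1) Diff_insert_absorb)
  have "clique_weight R p (insert w W) (Suc t)
      = clique_weight R p W (Suc t) + (\<Sum>S\<in>insert w ` ?N. \<Prod>v\<in>S. p v)"
    unfolding clique_weight_def cliques_insert[OF sym fin w]
    by (rule sum.union_disjoint) (use fin disj in \<open>auto simp: finite_cliques\<close>)
  also have "(\<Sum>S\<in>insert w ` ?N. \<Prod>v\<in>S. p v) = (\<Sum>S\<in>?N. p w * (\<Prod>v\<in>S. p v))"
    by (simp add: sum.reindex[OF inj] notin cong: sum.cong)
  finally show ?thesis by (simp add: clique_weight_def sum_distrib_left)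
qed

lemma power_ge_tangent:
  fixes Q y :: real
  assumes "0 \<le> y" "0 \<le> Q"
  shows "real (Suc t) * Q * y ^ t - real t * y ^ Suc t \<le> Q ^ Suc t"
proof (induction t)
  case 0
  then show ?case by simp
next
  case (Suc t)
  have "Q ^ Suc (Suc t) - (real (Suc (Suc t)) * Q * y ^ Suc t - real (Suc t) * y ^ Suc (Suc t))
    = Q * (Q ^ Suc t - (real (Suc t) * Q * y ^ t - real t * y ^ Suc t))
      + real (Suc t) * y ^ t * (Q - y)\<^sup>2"
    by (simp add: algebra_simps power2_eq_square)
  moreover have "0 \<le> Q * (Q ^ Suc t - (real (Suc t) * Q * y ^ t - real t * y ^ Suc t))"
    using Suc assms by simp
  moreover have "0 \<le> real (Suc t) * y ^ t * (Q - y)\<^sup>2" using assms by simp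
  ultimately show ?case by linarith
qed

lemma Suc_mult_choose_Suc:
  "real (Suc t) * real (w choose Suc t) = real (w choose t) * (real w - real t)"
proof (cases "t \<le> w")
  case True
  have "Suc t * (w choose Suc t) = (w - t) * (w choose t)"
    using binomial_absorption[of t w] binomial_absorb_comp[of w t] by simp
  then have "real (Suc t * (w choose Suc t)) = real ((w - t) * (w choose t))" by simp
  then show ?thesis using True by (simp add: of_nat_diff algebra_simps)
qed (simp add: binomial_eq_0)

lemma Maclaurin_step:
  fixes x y :: real
  assumes x: "0 \<le> x" and y: "0 \<le> y"
  shows "real (w choose Suc t) * y ^ Suc t + x * real (w choose t) * y ^ t
         \<le> real (Suc w choose Suc t) * ((x + real w * y) / real (Suc w)) ^ Suc t"
proof -
  define c where "c = real (w choose t)"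
  define Q where "Q = (x + real w * y) / real (Suc w)"
  have "0 \<le> Q" using x y by (simp add: Q_def)
  have c_Suc: "real (w choose Suc t) * real (Suc t) = c * (real w - real t)"
    using Suc_mult_choose_Suc[of t w] by (simp only: c_def mult.commute)
  have c_Suc_Suc: "real (Suc w choose Suc t) * real (Suc t) = real (Suc w) * c"
    using Suc_times_binomial[of t w] unfolding c_def
    by (metis mult.commute of_nat_mult)
  have x_eq: "x = real (Suc w) * Q - real w * y" by (simp add: Q_def)
  have "(real (w choose Suc t) * y ^ Suc t + x * c * y ^ t) * real (Suc t)
      = (real (w choose Suc t) * real (Suc t)) * y ^ Suc t + c * (real (Suc t) * x * y ^ t)"
    by (simp add: algebra_simps)
  also have "\<dots> = c * ((real w - real t) * y ^ Suc t + real (Suc t) * x * y ^ t)"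
    unfolding c_Suc by (simp add: algebra_simps)
  also have "\<dots> = c * real (Suc w) * (real (Suc t) * Q * y ^ t - real t * y ^ Suc t)"
    unfolding x_eq by (simp add: algebra_simps)
  also have "\<dots> \<le> c * real (Suc w) * Q ^ Suc t"
    using power_ge_tangent[OF y \<open>0 \<le> Q\<close>] by (intro mult_left_mono) (auto simp: c_def)
  also have "\<dots> = (real (Suc w) * c) * Q ^ Suc t"
    by (simp only: mult_ac)
  also have "\<dots> = (real (Suc w choose Suc t) * real (Suc t)) * Q ^ Suc t"
    by (simp only: c_Suc_Suc)
  also have "\<dots> = real (Suc w choose Suc t) * Q ^ Suc t * real (Suc t)"
    by (simp only: mult_ac)
  finally show ?thesis unfolding c_def Q_def by (rule mult_right_le_imp_le) simp
qed

text \<open>On a clique, \<open>clique_weight\<close> is an elementary symmetric polynomial, and this is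
  Maclaurin's inequality.\<close>

lemma clique_weight_clique_le:
  assumes sym: "\<And>x y. R x y = R y x"
  shows "finite K \<Longrightarrow> pairwise R K \<Longrightarrow> card K \<le> w \<Longrightarrow> (\<forall>v\<in>K. p v \<ge> 0) \<Longrightarrow>
    clique_weight R p K t \<le> real (w choose t) * (sum p K / real w) ^ t"
proof (induction K arbitrary: w t rule: finite_induct)
  case empty
  then show ?case by (cases t) (auto simp: clique_weight_0 clique_weight_empty)
next
  case (insert v K)
  obtain w' where w: "w = Suc w'" and card_K: "card K \<le> w'"
    using insert by (cases w) auto
  have clique_K: "pairwise R K" using insert(4) by (rule pairwise_subset) auto
  have p_K: "\<forall>v\<in>K. p v \<ge> 0" and p_v: "p v \<ge> 0" using insert by auto
  show ?case
  proof (cases t)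
    case 0
    then show ?thesis using insert by (simp add: clique_weight_0)
  next
    case (Suc t')
    have nbhd: "{x\<in>K. R v x} = K"
      using insert(2,4) unfolding pairwise_def by auto
    define y where "y = sum p K / real w'"
    have "0 \<le> y" unfolding y_def using p_K by (simp add: sum_nonneg)
    have sum_K: "sum p K = real w' * y"
      using card_K insert(1) by (cases "w' = 0") (auto simp: y_def)
    have "clique_weight R p (insert v K) t
        = clique_weight R p K (Suc t') + p v * clique_weight R p K t'"
      unfolding Suc using clique_weight_insert[OF sym insert(1,2)] nbhd by simp
    also have "\<dots> \<le> real (w' choose Suc t') * y ^ Suc t' + p v * (real (w' choose t') * y ^ t')"
      using insert.IH[OF clique_K card_K p_K, of "Suc t'"] insert.IH[OF clique_K card_K p_K, of t'] p_v
      unfolding y_def by (intro add_mono mult_left_mono) auto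
    also have "\<dots> \<le> real (Suc w' choose Suc t') * ((p v + real w' * y) / real (Suc w')) ^ Suc t'"
      using Maclaurin_step[OF p_v \<open>0 \<le> y\<close>, of w' t'] by (simp add: algebra_simps)
    also have "\<dots> = real (w choose t) * (sum p (insert v K) / real w) ^ t"
      using insert(1,2) sum_K unfolding w Suc by simp
    finally show ?thesis .
  qed
qed

text \<open>Zykov symmetrization: no clique contains both of the non-adjacent \<open>u\<close> and \<open>v\<close>, so
  \<open>clique_weight\<close> is affine in \<open>(p u, p v)\<close> with coefficients the weights of their
  neighbourhoods, and shifting weight to the heavier neighbourhood does not decrease it.\<close>

lemma clique_weight_le_merge:
  assumes sym: "\<And>x y. R x y = R y x" and fin: "finite V"
    and uv: "u \<in> V" "v \<in> V" "u \<noteq> v" "\<not> R u v"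
    and le: "clique_weight R p {x\<in>V-{u,v}. R v x} t \<le> clique_weight R p {x\<in>V-{u,v}. R u x} t"
    and "p v \<ge> 0"
  shows "clique_weight R p V (Suc t) \<le> clique_weight R (p(u := p u + p v)) (V - {v}) (Suc t)"
proof -
  define W where "W = V - {u,v}"
  define p' where "p' = p(u := p u + p v)"
  have V: "V = insert u (insert v W)" using uv unfolding W_def by auto
  have "finite W" using fin unfolding W_def by simp
  have notin: "u \<notin> insert v W" "v \<notin> W" "u \<notin> W" using uv unfolding W_def by auto
  have nbhd_u: "{x \<in> insert v W. R u x} = {x\<in>W. R u x}" using uv by auto
  have p'_W: "clique_weight R p' W s = clique_weight R p W s"
    "clique_weight R p' {x\<in>W. R u x} s = clique_weight R p {x\<in>W. R u x} s" for s
    using notin by (auto simp: p'_def intro: clique_weight_cong)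
  have "clique_weight R p V (Suc t) = clique_weight R p W (Suc t)
      + p v * clique_weight R p {x\<in>W. R v x} t + p u * clique_weight R p {x\<in>W. R u x} t"
    unfolding V using \<open>finite W\<close> notin nbhd_u by (simp add: clique_weight_insert[OF sym])
  also have "\<dots> \<le> clique_weight R p W (Suc t)
      + p v * clique_weight R p {x\<in>W. R u x} t + p u * clique_weight R p {x\<in>W. R u x} t"
    using mult_left_mono[OF le \<open>p v \<ge> 0\<close>] unfolding W_def by simp
  also have "\<dots> = clique_weight R p' (insert u W) (Suc t)"
    using \<open>finite W\<close> notin by (simp add: clique_weight_insert[OF sym] p'_W algebra_simps)
      (simp add: p'_def algebra_simps)
  also have "insert u W = V - {v}" using uv unfolding W_def by auto
  finally show ?thesis unfolding p'_def .
qed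

lemma sum_fun_upd_merge:
  assumes "finite V" "a \<in> V" "b \<in> V" "a \<noteq> b"
  shows "sum (p(a := p a + p b)) (V - {b}) = sum p V"
proof -
  have "sum (p(a := p a + p b)) (V - {b}) = p a + p b + sum (p(a := p a + p b)) (V - {b} - {a})"
    using assms by (simp add: sum.remove[of _ a])
  also have "sum (p(a := p a + p b)) (V - {b} - {a}) = sum p (V - {b} - {a})"
    by (rule sum.cong) auto
  also have "p a + p b + sum p (V - {b} - {a}) = sum p V"
    using assms by (simp add: sum.remove[of V b] sum.remove[of "V - {b}" a] algebra_simps)
  finally show ?thesis .
qed

lemma clique_weight_merge_nonadjacent:
  assumes sym: "\<And>x y. R x y = R y x" and fin: "finite V"
    and uv: "u \<in> V" "v \<in> V" "u \<noteq> v" "\<not> R u v" and p: "\<forall>x\<in>V. p x \<ge> 0"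
  obtains v q where "v \<in> V" "\<forall>x\<in>V - {v}. q x \<ge> 0" "sum q (V - {v}) = sum p V"
    "clique_weight R p V t \<le> clique_weight R q (V - {v}) t"
proof -
  note obtain_merged = that
  have merge: thesis if ab: "a \<in> V" "b \<in> V" "a \<noteq> b" "\<not> R a b"
    and le: "\<forall>s. t = Suc s \<longrightarrow>
      clique_weight R p {x\<in>V-{a,b}. R b x} s \<le> clique_weight R p {x\<in>V-{a,b}. R a x} s"
    for a b
  proof (rule obtain_merged)
    define q where "q = p(a := p a + p b)"
    show "b \<in> V" by fact
    show "\<forall>x\<in>V - {b}. q x \<ge> 0" using p ab by (simp add: q_def)
    show "sum q (V - {b}) = sum p V" unfolding q_def using fin ab(1-3) by (rule sum_fun_upd_merge)
    show "clique_weight R p V t \<le> clique_weight R q (V - {b}) t"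
    proof (cases t)
      case 0
      then show ?thesis using fin by (simp add: clique_weight_0)
    next
      case (Suc s)
      show ?thesis
        unfolding Suc q_def
      proof (rule clique_weight_le_merge[OF sym fin ab])
        show "clique_weight R p {x\<in>V-{a,b}. R b x} s \<le> clique_weight R p {x\<in>V-{a,b}. R a x} s"
          using le Suc by blast
      qed (use p ab in auto)
    qed
  qed
  show thesis
  proof (cases "\<forall>s. t = Suc s \<longrightarrow>
      clique_weight R p {x\<in>V-{u,v}. R v x} s \<le> clique_weight R p {x\<in>V-{u,v}. R u x} s")
    case True
    then show thesis by (rule merge[OF uv])
  next
    case False
    have "V - {v,u} = V - {u,v}" "\<not> R v u" using uv sym by auto
    moreover have "\<forall>s. t = Suc s \<longrightarrow>
        clique_weight R p {x\<in>V-{u,v}. R u x} s \<le> clique_weight R p {x\<in>V-{u,v}. R v x} s"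
      using False by auto
    ultimately show thesis using merge[OF uv(2,1) uv(3)[symmetric]] by simp
  qed
qed

text \<open>The weighted form of Zykov's theorem, by induction on \<open>card V\<close>: symmetrization reduces
  to the case where \<open>V\<close> itself is a clique.\<close>

theorem clique_weight_le:
  assumes sym: "\<And>x y. R x y = R y x"
  shows "finite V \<Longrightarrow> (\<forall>S\<subseteq>V. pairwise R S \<longrightarrow> card S \<le> w) \<Longrightarrow> (\<forall>v\<in>V. p v \<ge> 0) \<Longrightarrow>
    clique_weight R p V t \<le> real (w choose t) * (sum p V / real w) ^ t"
proof (induction "card V" arbitrary: V p rule: less_induct)
  case less
  show ?case
  proof (cases "pairwise R V")
    case True
    then show ?thesis using clique_weight_clique_le[OF sym less(2) True] less(3,4) by auto
  next
    case False
    then obtain u v where uv: "u \<in> V" "v \<in> V" "u \<noteq> v" "\<not> R u v"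
      unfolding pairwise_def by auto
    obtain v q where v: "v \<in> V" and q: "\<forall>x\<in>V - {v}. q x \<ge> 0" "sum q (V - {v}) = sum p V"
      and merge: "clique_weight R p V t \<le> clique_weight R q (V - {v}) t"
      by (rule clique_weight_merge_nonadjacent[OF sym less(2) uv less(4)])
    have "clique_weight R q (V - {v}) t \<le> real (w choose t) * (sum q (V - {v}) / real w) ^ t"
    proof (rule less(1))
      show "card (V - {v}) < card V" using less(2) v by (rule card_Diff1_less)
    qed (use less(2,3) q(1) in auto)
    with merge show ?thesis unfolding q(2) by linarith
  qed
qed

corollary card_cliques_le:
  assumes "\<And>x y. R x y = R y x" "finite V" "\<forall>S\<subseteq>V. pairwise R S \<longrightarrow> card S \<le> w"
  shows "real (card (cliques R V t)) \<le> real (w choose t) * (real (card V) / real w) ^ t"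
  using clique_weight_le[OF assms, of "\<lambda>_. 1" t] by (simp add: card_cliques)

lemma sum_card_clique_extensions:
  assumes fin: "finite C"
  shows "(\<Sum>X\<in>{X. X \<subseteq> C \<and> card X = j}. card {c\<in>C - X. pairwise R (insert c X)})
        = Suc j * card (cliques R C (Suc j))"
proof -
  define SS where "SS = {X. X \<subseteq> C \<and> card X = j}"
  define D where "D X = {c\<in>C - X. pairwise R (insert c X)}" for X
  have "finite SS" unfolding SS_def
    by (rule finite_subset[of _ "Pow C"]) (use fin in auto)
  have fin_X: "finite X" if "X \<in> SS" for X using that fin by (auto simp: SS_def intro: finite_subset)
  have fin_T: "finite T" if "T \<in> cliques R C (Suc j)" for T
    using that fin by (auto simp: cliques_def intro: finite_subset)
  have "(\<Sum>X\<in>SS. card (D X)) = card (SIGMA X:SS. D X)"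
    by (rule card_SigmaI[symmetric]) (use \<open>finite SS\<close> fin in \<open>auto simp: D_def\<close>)
  also have "\<dots> = card (SIGMA T:cliques R C (Suc j). T)"
  proof (rule bij_betw_same_card[of "\<lambda>(X, c). (insert c X, c)"],
      rule bij_betw_byWitness[of _ "\<lambda>(T, c). (T - {c}, c)"])
    show "\<forall>a\<in>SIGMA X:SS. D X. (case (case a of (X, c) \<Rightarrow> (insert c X, c)) of (T, c) \<Rightarrow> (T - {c}, c)) = a"
      unfolding D_def by auto
    show "\<forall>a\<in>SIGMA T:cliques R C (Suc j). T.
        (case (case a of (T, c) \<Rightarrow> (T - {c}, c)) of (X, c) \<Rightarrow> (insert c X, c)) = a"
      by auto
    show "(\<lambda>(X, c). (insert c X, c)) ` (SIGMA X:SS. D X) \<subseteq> (SIGMA T:cliques R C (Suc j). T)"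
      using fin_X by (force simp: SS_def D_def cliques_def)
    show "(\<lambda>(T, c). (T - {c}, c)) ` (SIGMA T:cliques R C (Suc j). T) \<subseteq> (SIGMA X:SS. D X)"
    proof
      fix e assume "e \<in> (\<lambda>(T, c). (T - {c}, c)) ` (SIGMA T:cliques R C (Suc j). T)"
      then obtain T c where T: "T \<in> cliques R C (Suc j)" "c \<in> T" and e: "e = (T - {c}, c)"
        by auto
      then have "insert c (T - {c}) = T" by auto
      then show "e \<in> (SIGMA X:SS. D X)"
        using T fin_T[OF T(1)] unfolding e SS_def D_def cliques_def by auto
    qed
  qed
  also have "\<dots> = (\<Sum>T\<in>cliques R C (Suc j). card T)"
    by (rule card_SigmaI) (use fin in \<open>auto simp: finite_cliques fin_T\<close>)
  also have "\<dots> = Suc j * card (cliques R C (Suc j))" by (simp add: cliques_def)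
  finally show ?thesis unfolding SS_def D_def .
qed

definition bipartite_edge :: "'a set \<Rightarrow> 'a set \<Rightarrow> 'a \<Rightarrow> 'a \<Rightarrow> bool" where
  "bipartite_edge A B u v \<longleftrightarrow> (u \<in> A \<and> v \<in> B) \<or> (u \<in> B \<and> v \<in> A)"

lemma card_lessThan_Suc_filter:
  "card {i\<in>{..<Suc n}. P i} = card {i\<in>{..<n}. P i} + (if P n then 1 else 0)"
proof -
  have "{i\<in>{..<Suc n}. P i} = (if P n then insert n {i\<in>{..<n}. P i} else {i\<in>{..<n}. P i})"
    by (auto simp: less_Suc_eq)
  then show ?thesis by simp
qed

text \<open>Induct on \<open>n\<close>: the vertices avoiding \<open>A n\<close>
  and those avoiding \<open>B n\<close> are each covered by the first \<open>n\<close> graphs.\<close>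

lemma Hansel_Kraft_sum_le_1:
  fixes A B :: "nat \<Rightarrow> 'a set"
  assumes disj: "\<And>i. A i \<inter> B i = {}"
  shows "finite V \<Longrightarrow> (\<forall>u\<in>V. \<forall>v\<in>V. u \<noteq> v \<longrightarrow> (\<exists>i<n. bipartite_edge (A i) (B i) u v))
    \<Longrightarrow> (\<Sum>v\<in>V. (1/2::real) ^ card {i\<in>{..<n}. v \<in> A i \<union> B i}) \<le> 1"
proof (induction n arbitrary: V)
  case 0
  then have "card V \<le> 1" by (metis card_le_Suc0_iff_eq less_zeroE One_nat_def)
  then show ?case by simp
next
  case (Suc n)
  define g where "g v = (1/2::real) ^ card {i\<in>{..<n}. v \<in> A i \<union> B i}" for v
  have cover: "\<forall>u\<in>W. \<forall>v\<in>W. u \<noteq> v \<longrightarrow> (\<exists>i<n. bipartite_edge (A i) (B i) u v)"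
    if W: "W \<subseteq> V" "\<forall>u\<in>W. \<forall>v\<in>W. \<not> bipartite_edge (A n) (B n) u v" for W
  proof (intro ballI impI)
    fix u v assume uv: "u \<in> W" "v \<in> W" "u \<noteq> v"
    then obtain i where "i < Suc n" "bipartite_edge (A i) (B i) u v"
      using Suc.prems(2) W(1) by blast
    moreover have "i \<noteq> n" using calculation W(2) uv by blast
    ultimately show "\<exists>i<n. bipartite_edge (A i) (B i) u v" using less_SucE by blast
  qed
  have IH1: "sum g {v\<in>V. v \<notin> B n} \<le> 1"
    unfolding g_def
  proof (rule Suc.IH)
    show "finite {v\<in>V. v \<notin> B n}" using Suc.prems(1) by simp
  qed (rule cover, auto simp: bipartite_edge_def)
  have IH2: "sum g {v\<in>V. v \<notin> A n} \<le> 1"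
    unfolding g_def
  proof (rule Suc.IH)
    show "finite {v\<in>V. v \<notin> A n}" using Suc.prems(1) by simp
  qed (rule cover, auto simp: bipartite_edge_def)
  have "(\<Sum>v\<in>V. (1/2::real) ^ card {i\<in>{..<Suc n}. v \<in> A i \<union> B i})
      = (\<Sum>v\<in>V. (1/2) * ((if v \<notin> B n then g v else 0) + (if v \<notin> A n then g v else 0)))"
    unfolding card_lessThan_Suc_filter g_def using disj[of n] by (intro sum.cong) auto
  also have "\<dots> = (1/2) * (sum g {v\<in>V. v \<notin> B n} + sum g {v\<in>V. v \<notin> A n})"
    unfolding sum.inter_filter[OF Suc.prems(1)] sum.distrib[symmetric] sum_distrib_left ..
  also have "\<dots> \<le> 1" using IH1 IH2 by simp
  finally show ?case .
qed

lemma real_card_filter: "finite A \<Longrightarrow> real (card {x\<in>A. P x}) = (\<Sum>x\<in>A. if P x then 1 else 0)"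
  by (simp add: sum.If_cases Int_def)

text \<open>Tangent-line bound \<open>2^-d \<ge> 2^-a (1 - ln 2 (d - a))\<close> at the mean \<open>a\<close> of the exponents
  (Jensen for the convex function \<open>2^-x\<close>).\<close>

lemma card_mult_log_le_sum_exponents:
  fixes d :: "'a \<Rightarrow> nat"
  assumes fin: "finite V" and ne: "V \<noteq> {}"
    and kraft: "(\<Sum>v\<in>V. (1/2::real) ^ d v) \<le> 1"
  shows "real (card V) * log 2 (real (card V)) \<le> (\<Sum>v\<in>V. real (d v))"
proof -
  define M where "M = real (card V)"
  have "M > 0" using fin ne by (simp add: M_def card_gt_0_iff)
  define a where "a = (\<Sum>v\<in>V. real (d v)) / M"
  define E where "E = exp (- ln 2 * a)"
  have tangent: "E * (1 - ln 2 * (real (d v) - a)) \<le> (1/2::real) ^ d v" for v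
  proof -
    have "(1/2::real) ^ d v = exp (- ln 2 * real (d v))"
      by (simp add: exp_minus exp_of_nat_mult power_one_over inverse_eq_divide mult.commute)
    also have "\<dots> = E * exp (- ln 2 * (real (d v) - a))"
      by (simp add: E_def exp_add[symmetric] algebra_simps)
    finally show ?thesis
      using exp_ge_add_one_self[of "- ln 2 * (real (d v) - a)"]
      by (simp add: E_def)
  qed
  have "(\<Sum>v\<in>V. E * (1 - ln 2 * (real (d v) - a)))
      = (\<Sum>v\<in>V. E * (1 + ln 2 * a) - (E * ln 2) * real (d v))"
    by (rule sum.cong) (auto simp: algebra_simps)
  also have "\<dots> = M * (E * (1 + ln 2 * a)) - (E * ln 2) * (\<Sum>v\<in>V. real (d v))"
    by (simp add: sum_subtractf sum_distrib_left[symmetric] M_def)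
  also have "\<dots> = E * M" using \<open>M > 0\<close> by (simp add: a_def algebra_simps)
  moreover have "(\<Sum>v\<in>V. E * (1 - ln 2 * (real (d v) - a))) \<le> (\<Sum>v\<in>V. (1/2) ^ d v)"
    by (rule sum_mono) (rule tangent)
  ultimately have "E * M \<le> 1" using kraft by linarith
  then have "M \<le> exp (ln 2 * a)" by (simp add: E_def exp_minus field_simps)
  then have "ln M \<le> ln 2 * a" using \<open>M > 0\<close> by (metis ln_exp ln_le_cancel_iff exp_gt_zero)
  then have "log 2 M \<le> a" by (simp add: log_def field_simps)
  then show ?thesis using \<open>M > 0\<close> by (simp add: a_def M_def field_simps)
qed

theorem Hansel_lemma:
  fixes A B :: "nat \<Rightarrow> 'a set"
  assumes "\<And>i. A i \<inter> B i = {}" and fin: "finite V" and "V \<noteq> {}"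
    and "\<forall>u\<in>V. \<forall>v\<in>V. u \<noteq> v \<longrightarrow> (\<exists>i<n. bipartite_edge (A i) (B i) u v)"
  shows "real (card V) * log 2 (real (card V)) \<le> (\<Sum>i<n. real (card {v\<in>V. v \<in> A i \<union> B i}))"
proof -
  have "real (card V) * log 2 (real (card V))
      \<le> (\<Sum>v\<in>V. real (card {i\<in>{..<n}. v \<in> A i \<union> B i}))"
    using assms by (intro card_mult_log_le_sum_exponents Hansel_Kraft_sum_le_1)
  also have "\<dots> = (\<Sum>v\<in>V. \<Sum>i<n. if v \<in> A i \<union> B i then 1 else 0)"
    by (rule sum.cong[OF refl], rule real_card_filter) simp
  also have "\<dots> = (\<Sum>i<n. \<Sum>v\<in>V. if v \<in> A i \<union> B i then 1 else 0)"
    by (rule sum.swap)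
  also have "\<dots> = (\<Sum>i<n. real (card {v\<in>V. v \<in> A i \<union> B i}))"
    by (rule sum.cong[OF refl], rule real_card_filter[symmetric]) (rule fin)
  finally show ?thesis .
qed

lemma pairwise_orthogonal_card_le:
  fixes S :: "'a::euclidean_space set"
  assumes "pairwise orthogonal S" "0 \<notin> S"
  shows "card S \<le> DIM('a)"
  using independent_bound[OF pairwise_orthogonal_independent[OF assms]] by simp

lemma orthogonal_to_all_but_one:
  fixes B :: "'a::euclidean_space set"
  assumes orth: "pairwise orthogonal B" and "0 \<notin> B" and card: "card B = DIM('a)"
    and b: "b \<in> B" and perp: "\<forall>x\<in>B - {b}. orthogonal z x"
  shows "z = (z \<bullet> b / (b \<bullet> b)) *\<^sub>R b"
proof -
  have "independent B" by (rule pairwise_orthogonal_independent) fact+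
  moreover have "finite B" using orth by (rule pairwise_orthogonal_imp_finite)
  ultimately have span: "span B = UNIV"
    using card card_eq_dim[of B UNIV] by auto
  define z' where "z' = z - (z \<bullet> b / (b \<bullet> b)) *\<^sub>R b"
  have "b \<bullet> b \<noteq> 0" using b \<open>0 \<notin> B\<close> by auto
  have z'_perp: "orthogonal z' x" if "x \<in> B" for x
  proof (cases "x = b")
    case True
    then show ?thesis using \<open>b \<bullet> b \<noteq> 0\<close>
      by (simp add: z'_def orthogonal_def inner_diff_left)
  next
    case False
    then have "orthogonal z x" "orthogonal b x"
      using perp orth b that by (auto simp: pairwise_def)
    then show ?thesis by (simp add: z'_def orthogonal_clauses)
  qed
  have "orthogonal z' z'"
    by (rule orthogonal_to_span[of z' B z']) (simp_all add: span z'_perp)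
  then show ?thesis by (simp add: z'_def orthogonal_def)
qed

lemma unit_orthogonal_to_all_but_one:
  fixes B :: "'a::euclidean_space set"
  assumes "pairwise orthogonal B" "\<forall>x\<in>B. norm x = 1" "card B = DIM('a)" "b \<in> B"
    and "norm z = 1" "\<forall>x\<in>B - {b}. orthogonal z x"
  shows "z = b \<or> z = - b"
proof -
  have "b \<bullet> b = 1" using assms(2,4) by (simp add: norm_eq_1)
  moreover have "0 \<notin> B" using assms(2) by force
  ultimately have z: "z = (z \<bullet> b) *\<^sub>R b"
    using orthogonal_to_all_but_one[OF assms(1) _ assms(3,4,6)] by simp
  have "norm z = \<bar>z \<bullet> b\<bar>"
    using arg_cong[of _ _ norm, OF z] assms(2,4) by simp
  then have "\<bar>z \<bullet> b\<bar> = 1" using assms(5) by simp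
  then show ?thesis using z by (cases "z \<bullet> b \<ge> 0") auto
qed

definition coord_orthogonal :: "nat \<Rightarrow> (nat \<Rightarrow> 'a::real_inner) \<Rightarrow> (nat \<Rightarrow> 'a) \<Rightarrow> bool" where
  "coord_orthogonal i c d \<longleftrightarrow> orthogonal (c i) (d i)"

definition coord_extensions ::
    "nat \<Rightarrow> (nat \<Rightarrow> 'a::real_inner) set \<Rightarrow> (nat \<Rightarrow> 'a) set \<Rightarrow> (nat \<Rightarrow> 'a) set" where
  "coord_extensions i C X = {c\<in>C - X. pairwise (coord_orthogonal i) (insert c X)}"

lemma coord_orthogonal_sym: "coord_orthogonal i c d = coord_orthogonal i d c"
  by (simp add: coord_orthogonal_def orthogonal_commute)

lemma sphere_code_norm: "sphere_code n C \<Longrightarrow> c \<in> C \<Longrightarrow> i < n \<Longrightarrow> norm (c i) = 1"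
  unfolding sphere_code_def by (auto simp: PiE_def Pi_def)

lemma sphere_code_subset: "sphere_code n C \<Longrightarrow> S \<subseteq> C \<Longrightarrow> sphere_code n S"
  unfolding sphere_code_def by blast

lemma vector_k_separating_subset:
  "vector_k_separating n C \<Longrightarrow> S \<subseteq> C \<Longrightarrow> vector_k_separating n S"
  unfolding vector_k_separating_def by (meson order_trans)

lemma vector_k_separatingD:
  fixes C :: "(nat \<Rightarrow> real^'k) set"
  assumes "vector_k_separating n C" "S \<subseteq> C" "finite S" "card S = CARD('k)"
  shows "\<exists>i<n. pairwise (coord_orthogonal i) S"
  using assms unfolding vector_k_separating_def pairwise_def coord_orthogonal_def orthogonal_def
  by blast

lemma inj_on_coord_clique:
  assumes "sphere_code n C" "i < n" "S \<subseteq> C" "pairwise (coord_orthogonal i) S"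
  shows "inj_on (\<lambda>c. c i) S"
proof (rule inj_onI, rule ccontr)
  fix x y assume xy: "x \<in> S" "y \<in> S" "x i = y i" "x \<noteq> y"
  then have "x i \<bullet> y i = 0"
    using assms(4) unfolding pairwise_def coord_orthogonal_def orthogonal_def by blast
  then have "x i \<bullet> x i = 0" using xy(3) by simp
  moreover have "norm (x i) = 1" using sphere_code_norm assms(1-3) xy(1) by blast
  ultimately show False by (simp add: norm_eq_1)
qed

lemma coord_clique_image:
  assumes "sphere_code n C" "i < n" "S \<subseteq> C" "pairwise (coord_orthogonal i) S"
  shows "pairwise orthogonal ((\<lambda>c. c i) ` S)" "\<forall>x\<in>(\<lambda>c. c i) ` S. norm x = 1"
    "card ((\<lambda>c. c i) ` S) = card S"
proof -
  show "pairwise orthogonal ((\<lambda>c. c i) ` S)"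
    using assms(4) by (auto simp: pairwise_def coord_orthogonal_def)
  show "\<forall>x\<in>(\<lambda>c. c i) ` S. norm x = 1"
    using sphere_code_norm[OF assms(1) _ assms(2)] assms(3) by auto
  show "card ((\<lambda>c. c i) ` S) = card S"
    by (rule card_image[OF inj_on_coord_clique[OF assms]])
qed

lemma card_coord_clique_le:
  fixes C :: "(nat \<Rightarrow> real^'k) set"
  assumes "sphere_code n C" "i < n" "S \<subseteq> C" "pairwise (coord_orthogonal i) S"
  shows "card S \<le> CARD('k)"
proof -
  have "0 \<notin> (\<lambda>c. c i) ` S" using coord_clique_image(2)[OF assms] by force
  then show ?thesis
    using pairwise_orthogonal_card_le[OF coord_clique_image(1)[OF assms]]
    by (simp add: coord_clique_image(3)[OF assms])
qed

text \<open>Given \<open>k - 2\<close> codewords \<open>X\<close>, the vectors at coordinate \<open>i\<close> of their common orthogonal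
  extensions lie in a plane, so the partner of \<open>u\<close> in that plane is unique up to sign.\<close>

lemma coord_extension_partner:
  fixes C :: "(nat \<Rightarrow> real^'k) set"
  assumes sc: "sphere_code n C" and i: "i < n" and X: "X \<subseteq> C" "card X + 2 = CARD('k)"
    and ext: "u \<in> coord_extensions i C X" "v \<in> coord_extensions i C X"
      "d \<in> coord_extensions i C X"
    and uv: "coord_orthogonal i u v" and ud: "coord_orthogonal i u d"
  shows "d i = v i \<or> d i = - v i"
proof -
  have uvd: "u \<in> C - X" "v \<in> C - X" "d \<in> C - X"
    and cu: "pairwise (coord_orthogonal i) (insert u X)"
    and cv: "pairwise (coord_orthogonal i) (insert v X)"
    and cd: "pairwise (coord_orthogonal i) (insert d X)"
    using ext by (simp_all add: coord_extensions_def)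
  define T where "T = insert u (insert v X)"
  have "norm (u i) = 1" using sphere_code_norm[OF sc _ i] uvd by auto
  then have "u \<noteq> v" using uv by (auto simp: coord_orthogonal_def orthogonal_def norm_eq_1)
  have T: "T \<subseteq> C" "pairwise (coord_orthogonal i) T"
    using X uvd cu cv uv coord_orthogonal_sym unfolding T_def pairwise_def by auto
  have "pairwise (coord_orthogonal i) X" using cu by (rule pairwise_subset) auto
  then have "finite X"
    using pairwise_orthogonal_imp_finite[OF coord_clique_image(1)[OF sc i X(1)]]
      inj_on_coord_clique[OF sc i X(1)] by (blast intro: finite_imageD)
  then have "card T = CARD('k)" using X(2) uvd \<open>u \<noteq> v\<close> by (simp add: T_def)
  show ?thesis
  proof (rule unit_orthogonal_to_all_but_one[of "(\<lambda>c. c i) ` T"])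
    show "pairwise orthogonal ((\<lambda>c. c i) ` T)" "\<forall>x\<in>(\<lambda>c. c i) ` T. norm x = 1"
      using coord_clique_image[OF sc i T] by auto
    show "card ((\<lambda>c. c i) ` T) = DIM(real^'k)"
      using coord_clique_image(3)[OF sc i T] \<open>card T = CARD('k)\<close> by simp
    show "v i \<in> (\<lambda>c. c i) ` T" "norm (d i) = 1"
      using sphere_code_norm[OF sc _ i] uvd by (auto simp: T_def)
    show "\<forall>x\<in>(\<lambda>c. c i) ` T - {v i}. orthogonal (d i) x"
      using cd ud uvd unfolding T_def pairwise_def coord_orthogonal_def
      by (auto simp: orthogonal_commute)
  qed
qed

lemma Min_image_neq_Min_image:
  assumes "inj_on r C" "L1 \<subseteq> C" "L2 \<subseteq> C" "finite L1" "finite L2" "L1 \<noteq> {}" "L2 \<noteq> {}"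
    and "L1 \<inter> L2 = {}"
  shows "Min (r ` L1) \<noteq> Min (r ` L2)"
proof
  assume eq: "Min (r ` L1) = Min (r ` L2)"
  have "Min (r ` L1) \<in> r ` L1" "Min (r ` L2) \<in> r ` L2" using assms(4-7) by (auto intro: Min_in)
  then obtain d1 d2 where d: "d1 \<in> L1" "r d1 = Min (r ` L1)" "d2 \<in> L2" "r d2 = Min (r ` L2)"
    by (metis imageE)
  then have "d1 = d2" using assms(1-3) eq by (metis inj_onD subsetD)
  then show False using d assms(8) by blast
qed

definition coord_line :: "nat \<Rightarrow> (nat \<Rightarrow> 'a::real_inner) set \<Rightarrow> (nat \<Rightarrow> 'a) set \<Rightarrow> (nat \<Rightarrow> 'a)
    \<Rightarrow> (nat \<Rightarrow> 'a) set" where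
  "coord_line i C X c = {d\<in>coord_extensions i C X. d i = c i \<or> d i = - c i}"

lemma coord_extension_neighbours:
  fixes C :: "(nat \<Rightarrow> real^'k) set"
  assumes sc: "sphere_code n C" and i: "i < n" and X: "X \<subseteq> C" "card X + 2 = CARD('k)"
    and u: "u \<in> coord_extensions i C X" and v: "v \<in> coord_extensions i C X"
    and uv: "coord_orthogonal i u v"
  shows "{d\<in>coord_extensions i C X. coord_orthogonal i u d} = coord_line i C X v"
proof
  show "{d\<in>coord_extensions i C X. coord_orthogonal i u d} \<subseteq> coord_line i C X v"
    using coord_extension_partner[OF sc i X u v _ uv] by (auto simp: coord_line_def)
  show "coord_line i C X v \<subseteq> {d\<in>coord_extensions i C X. coord_orthogonal i u d}"
    using uv by (auto simp: coord_line_def coord_orthogonal_def orthogonal_clauses)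
qed

lemma coord_lines_disjoint:
  assumes "sphere_code n C" "i < n" "u \<in> C" "coord_orthogonal i u v"
  shows "coord_line i C X u \<inter> coord_line i C X v = {}"
proof -
  have "norm (u i) = 1" using sphere_code_norm assms(1-3) by blast
  then have "v i \<noteq> u i \<and> v i \<noteq> - u i"
    using assms(4) by (auto simp: coord_orthogonal_def orthogonal_def norm_eq_1)
  then show ?thesis unfolding coord_line_def by (auto simp: minus_equation_iff)
qed

lemma vector_k_separating_extensions:
  fixes C :: "(nat \<Rightarrow> real^'k) set"
  assumes sep: "vector_k_separating n C" and X: "finite X" "X \<subseteq> C" "card X + 2 = CARD('k)"
    and uv: "u \<in> C - X" "v \<in> C - X" "u \<noteq> v"
  shows "\<exists>i<n. u \<in> coord_extensions i C X \<and> v \<in> coord_extensions i C X \<and> coord_orthogonal i u v"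
proof -
  define T where "T = insert u (insert v X)"
  have "T \<subseteq> C" "finite T" "card T = CARD('k)" unfolding T_def using uv X by auto
  then obtain i where "i < n" and T: "pairwise (coord_orthogonal i) T"
    using vector_k_separatingD[OF sep] by blast
  moreover have "pairwise (coord_orthogonal i) (insert u X)" "pairwise (coord_orthogonal i) (insert v X)"
    using T by (auto simp: T_def intro: pairwise_subset)
  moreover have "coord_orthogonal i u v" using T uv(3) unfolding T_def pairwise_def by auto
  ultimately show ?thesis using uv by (auto simp: coord_extensions_def)
qed

text \<open>At coordinate \<open>i\<close>, orthogonality between extensions of \<open>X\<close> matches the lines \<open>\<plusminus>c i\<close> in
  pairs. Orienting each matched pair of lines by the least index \<open>r\<close> of a codeword on it puts
  the two members of any pair separated at \<open>i\<close> into different classes \<open>A i\<close>, \<open>B i\<close>.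
  (For \<open>c\<close> without partner, \<open>first i c\<close> compares with \<open>Min {}\<close>; such \<open>c\<close> are never separated
  at \<open>i\<close>.)\<close>

lemma card_mult_log_le_sum_coord_extensions:
  fixes C :: "(nat \<Rightarrow> real^'k) set"
  assumes sc: "sphere_code n C" and sep: "vector_k_separating n C" and fin: "finite C"
    and X: "X \<subseteq> C" "card X + 2 = CARD('k)" and ne: "C - X \<noteq> {}"
  shows "real (card (C - X)) * log 2 (real (card (C - X)))
     \<le> (\<Sum>i<n. real (card (coord_extensions i C X)))"
proof -
  obtain r :: "(nat \<Rightarrow> real^'k) \<Rightarrow> nat" where r: "inj_on r C"
    using finite_imp_inj_to_nat_seg[OF fin] by blast
  define D where "D i = coord_extensions i C X" for i
  define first where "first i c \<longleftrightarrow>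
    Min (r ` coord_line i C X c) < Min (r ` {d\<in>D i. coord_orthogonal i c d})" for i c
  define A where "A i = {c\<in>D i. first i c}" for i
  define B where "B i = {c\<in>D i. \<not> first i c}" for i
  have D_sub: "D i \<subseteq> C - X" for i by (auto simp: D_def coord_extensions_def)
  have cover: "\<forall>u\<in>C - X. \<forall>v\<in>C - X. u \<noteq> v \<longrightarrow> (\<exists>i<n. bipartite_edge (A i) (B i) u v)"
  proof (intro ballI impI)
    fix u v assume "u \<in> C - X" "v \<in> C - X" "u \<noteq> v"
    then obtain i where i: "i < n" and uD: "u \<in> D i" and vD: "v \<in> D i"
      and uv: "coord_orthogonal i u v"
      using vector_k_separating_extensions[OF sep finite_subset[OF X(1) fin] X] by (auto simp: D_def)
    then have "coord_orthogonal i v u" by (simp add: coord_orthogonal_sym)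
    then have "first i u \<longleftrightarrow> Min (r ` coord_line i C X u) < Min (r ` coord_line i C X v)"
      "first i v \<longleftrightarrow> Min (r ` coord_line i C X v) < Min (r ` coord_line i C X u)"
      unfolding first_def D_def using coord_extension_neighbours[OF sc i X] uD vD uv
      by (simp_all add: D_def)
    moreover have "Min (r ` coord_line i C X u) \<noteq> Min (r ` coord_line i C X v)"
    proof (rule Min_image_neq_Min_image[OF r])
      show "coord_line i C X u \<inter> coord_line i C X v = {}"
        using coord_lines_disjoint[OF sc i _ uv] uD D_sub by blast
      show "finite (coord_line i C X u)" "finite (coord_line i C X v)"
        using fin by (simp_all add: coord_line_def coord_extensions_def)
    qed (use uD vD in \<open>auto simp: coord_line_def D_def coord_extensions_def\<close>)
    ultimately have "first i u \<noteq> first i v" by linarith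
    then show "\<exists>i<n. bipartite_edge (A i) (B i) u v"
      using i uD vD by (auto simp: bipartite_edge_def A_def B_def)
  qed
  have "real (card (C - X)) * log 2 (real (card (C - X)))
      \<le> (\<Sum>i<n. real (card {v\<in>C - X. v \<in> A i \<union> B i}))"
    by (rule Hansel_lemma[OF _ _ ne cover]) (use fin in \<open>auto simp: A_def B_def\<close>)
  moreover have "{v\<in>C - X. v \<in> A i \<union> B i} = D i" for i
    using D_sub by (auto simp: A_def B_def)
  ultimately show ?thesis by (simp add: D_def)
qed

lemma sum_card_coord_extensions_le:
  fixes C :: "(nat \<Rightarrow> real^'k) set"
  assumes sc: "sphere_code n C" and fin: "finite C"
  shows "(\<Sum>X | X \<subseteq> C \<and> card X = j. \<Sum>i<n. real (card (coord_extensions i C X)))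
    \<le> real n * (real (Suc j) * real (CARD('k) choose Suc j) * (real (card C) / real CARD('k)) ^ Suc j)"
    (is "_ \<le> real n * ?bound")
proof -
  have per_coord: "(\<Sum>X | X \<subseteq> C \<and> card X = j. real (card (coord_extensions i C X))) \<le> ?bound"
    if i: "i < n" for i
  proof -
    have "(\<Sum>X | X \<subseteq> C \<and> card X = j. card (coord_extensions i C X))
        = Suc j * card (cliques (coord_orthogonal i) C (Suc j))"
      unfolding coord_extensions_def by (rule sum_card_clique_extensions[OF fin])
    then have "(\<Sum>X | X \<subseteq> C \<and> card X = j. real (card (coord_extensions i C X)))
        = real (Suc j) * real (card (cliques (coord_orthogonal i) C (Suc j)))"
      by (simp only: of_nat_sum [symmetric] of_nat_mult [symmetric])
    also have "\<dots> \<le> ?bound" unfolding mult.assoc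
    proof (rule mult_left_mono)
      show "real (card (cliques (coord_orthogonal i) C (Suc j)))
          \<le> real (CARD('k) choose Suc j) * (real (card C) / real CARD('k)) ^ Suc j"
        using card_coord_clique_le[OF sc i]
        by (intro card_cliques_le[OF coord_orthogonal_sym fin]) blast
    qed simp
    finally show ?thesis .
  qed
  have "(\<Sum>X | X \<subseteq> C \<and> card X = j. \<Sum>i<n. real (card (coord_extensions i C X)))
      = (\<Sum>i<n. \<Sum>X | X \<subseteq> C \<and> card X = j. real (card (coord_extensions i C X)))"
    by (rule sum.swap)
  also have "\<dots> \<le> (\<Sum>i<n. ?bound)" by (rule sum_mono) (use per_coord in simp)
  finally show ?thesis by simp
qed

lemma card_choose_mult_log_le:
  fixes C :: "(nat \<Rightarrow> real^'k) set"
  assumes sc: "sphere_code n C" and sep: "vector_k_separating n C" and fin: "finite C"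
    and K3: "CARD('k) \<ge> 3" and m: "card C \<ge> CARD('k) - 1"
  shows "real (card C choose (CARD('k) - 1)) * log 2 (real (card C) - real CARD('k) + 2)
     \<le> real n * real CARD('k) * (real (card C) / real CARD('k)) ^ (CARD('k) - 1)"
proof -
  define K where "K = CARD('k)"
  define j where "j = K - 2"
  define M where "M = card C"
  have Kj: "K - 1 = Suc j" "K choose Suc j = K" using K3 by (auto simp: K_def j_def binomial_symmetric)
  have "j < M" using m K3 by (simp add: K_def j_def M_def)
  define SS where "SS = {X. X \<subseteq> C \<and> card X = j}"
  have "finite SS" unfolding SS_def
    by (rule finite_subset[of _ "Pow C"]) (use fin in auto)
  have card_SS: "card SS = M choose j" unfolding SS_def M_def using n_subsets[OF fin] by simp
  have card_diff: "card (C - X) = M - j" if "X \<in> SS" for X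
    using that fin unfolding SS_def M_def by (auto simp: card_Diff_subset finite_subset)
  have per_X: "real (M - j) * log 2 (real (M - j))
      \<le> (\<Sum>i<n. real (card (coord_extensions i C X)))" if X: "X \<in> SS" for X
  proof -
    have "card (C - X) \<noteq> 0" using card_diff[OF X] \<open>j < M\<close> by simp
    then have "C - X \<noteq> {}" by (metis card.empty)
    then show ?thesis using card_mult_log_le_sum_coord_extensions[OF sc sep fin, of X]
      X K3 card_diff[OF X] by (simp add: SS_def K_def j_def)
  qed
  have "real (M choose Suc j) * real (Suc j) * log 2 (real (M - j))
      = real (M choose j) * (real (M - j) * log 2 (real (M - j)))"
    using binomial_absorb_comp[of M j] binomial_absorption[of j M]
    by (metis mult.assoc mult.commute of_nat_mult)
  also have "\<dots> \<le> (\<Sum>X\<in>SS. \<Sum>i<n. real (card (coord_extensions i C X)))"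
    using sum_mono[of SS _ "\<lambda>X. \<Sum>i<n. real (card (coord_extensions i C X))", OF per_X]
    by (simp add: card_SS)
  also have "\<dots> \<le> real n * real (Suc j) * real K * (real M / real K) ^ Suc j"
    using sum_card_coord_extensions_le[OF sc fin, of j]
    unfolding SS_def M_def K_def[symmetric] Kj(2) by (simp only: mult.assoc)
  finally have "real (Suc j) * (real (M choose Suc j) * log 2 (real (M - j)))
      \<le> real (Suc j) * (real n * real K * (real M / real K) ^ Suc j)"
    by (simp only: mult_ac)
  then have "real (M choose Suc j) * log 2 (real (M - j)) \<le> real n * real K * (real M / real K) ^ Suc j"
    by (rule mult_left_le_imp_le) simp
  moreover have "real (M - j) = real M - real K + 2" using \<open>j < M\<close> K3 by (simp add: K_def j_def of_nat_diff)
  ultimately show ?thesis unfolding K_def[symmetric] M_def[symmetric] Kj(1) by simp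
qed

lemma pow_le_choose_mult_fact:
  assumes "k \<le> m"
  shows "(real m - real k + 1) ^ k \<le> real (m choose k) * fact k"
proof -
  have "real (m choose k) * fact k = (\<Prod>i = 0..<k. real m - real i)"
    by (simp only: binomial_gbinomial gbinomial_mult_fact')
  moreover have "(\<Prod>i = 0..<k. real m - real k + 1) \<le> (\<Prod>i = 0..<k. real m - real i)"
    by (rule prod_mono) (use assms in auto)
  ultimately show ?thesis by simp
qed

lemma one_minus_le_pow_one_minus_div:
  fixes c M \<theta> :: real
  assumes "0 \<le> c" "c \<le> M" "0 < M" "real m * c \<le> \<theta> * M"
  shows "1 - \<theta> \<le> (1 - c / M) ^ m"
proof -
  have "-1 \<le> - c / M" "real m * (c / M) \<le> \<theta>" using assms by (simp_all add: field_simps)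
  then show ?thesis using Bernoulli_inequality[of "- c / M" m] by simp
qed

lemma log2_le_one_plus_log2:
  assumes "0 < x" "x \<le> 2 * y"
  shows "log 2 x \<le> 1 + log 2 y"
proof -
  have "log 2 x \<le> log 2 (2 * y)" using assms by simp
  also have "\<dots> = 1 + log 2 y" using assms by (simp add: log_mult_pos)
  finally show ?thesis .
qed

lemma card_pow_mult_log_le:
  fixes C :: "(nat \<Rightarrow> real^'k) set"
  assumes sc: "sphere_code n C" and sep: "vector_k_separating n C" and fin: "finite C"
    and K3: "CARD('k) \<ge> 3" and m: "card C \<ge> CARD('k) - 1"
  shows "(real (card C) - real CARD('k) + 2) ^ (CARD('k) - 1) * log 2 (real (card C) - real CARD('k) + 2)
     \<le> real n * (fact CARD('k) / real CARD('k) ^ (CARD('k) - 1)) * real (card C) ^ (CARD('k) - 1)"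
proof -
  define K where "K = CARD('k)"
  define M where "M = card C"
  define L where "L = log 2 (real M - real K + 2)"
  have "K \<ge> 3" "K - 1 \<le> M" using K3 m by (simp_all add: K_def M_def)
  then have "1 \<le> real M - real K + 2" by linarith
  then have "L \<ge> 0" by (simp add: L_def)
  have shift: "real M - real (K - 1) + 1 = real M - real K + 2"
    using \<open>K \<ge> 3\<close> by (simp add: of_nat_diff)
  obtain K' where "K = Suc K'" using \<open>K \<ge> 3\<close> by (cases K) auto
  then have fact_K: "fact K = real K * fact (K - 1)" by simp
  have "(real M - real K + 2) ^ (K - 1) * L \<le> real (M choose (K - 1)) * fact (K - 1) * L"
    using pow_le_choose_mult_fact[OF \<open>K - 1 \<le> M\<close>] \<open>L \<ge> 0\<close>
    unfolding shift by (rule mult_right_mono)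
  also have "\<dots> = (real (M choose (K - 1)) * L) * fact (K - 1)" by (simp only: mult_ac)
  also have "\<dots> \<le> (real n * real K * (real M / real K) ^ (K - 1)) * fact (K - 1)"
    using card_choose_mult_log_le[OF sc sep fin K3 m]
    by (intro mult_right_mono) (simp_all only: K_def M_def L_def fact_ge_zero)
  also have "\<dots> = real n * (fact K / real K ^ (K - 1)) * real M ^ (K - 1)"
    unfolding fact_K power_divide by simp
  finally show ?thesis unfolding K_def M_def L_def .
qed

lemma log_card_le_mult_dim:
  fixes C :: "(nat \<Rightarrow> real^'k) set"
  assumes sc: "sphere_code n C" and sep: "vector_k_separating n C" and fin: "finite C"
    and K3: "CARD('k) \<ge> 3" and m: "card C \<ge> CARD('k) - 1"
  shows "log 2 (real (card C) - real CARD('k) + 2) \<le> real n * real CARD('k)"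
proof -
  define K where "K = CARD('k)"
  define M where "M = card C"
  define P where "P = (real M / real (K - 1)) ^ (K - 1)"
  have "K \<ge> 3" "K - 1 \<le> M" using K3 m by (simp_all add: K_def M_def)
  then have "P > 0" by (simp add: P_def)
  have "0 \<le> log 2 (real M - real K + 2)" using \<open>K - 1 \<le> M\<close> \<open>K \<ge> 3\<close> by simp
  then have "P * log 2 (real M - real K + 2) \<le> real (M choose (K - 1)) * log 2 (real M - real K + 2)"
    unfolding P_def by (intro mult_right_mono binomial_ge_n_over_k_pow_k \<open>K - 1 \<le> M\<close>)
  also have "\<dots> \<le> real n * real K * (real M / real K) ^ (K - 1)"
    using card_choose_mult_log_le[OF sc sep fin K3 m] by (simp add: K_def M_def)
  also have "\<dots> \<le> real n * real K * P" unfolding P_def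
    using \<open>K \<ge> 3\<close> by (intro mult_left_mono power_mono divide_left_mono) auto
  finally have "P * log 2 (real M - real K + 2) \<le> P * (real n * real K)"
    by (simp only: mult_ac)
  then show ?thesis using \<open>P > 0\<close> by (simp add: K_def M_def)
qed

lemma vector_k_separating_finite:
  fixes C :: "(nat \<Rightarrow> real^'k) set"
  assumes sc: "sphere_code n C" and sep: "vector_k_separating n C" and K3: "CARD('k) \<ge> 3"
  shows "finite C"
proof (rule ccontr)
  assume "infinite C"
  define K where "K = CARD('k)"
  obtain S where S: "finite S" "card S = 2 ^ (n * K) + K" "S \<subseteq> C"
    using infinite_arbitrarily_large[OF \<open>infinite C\<close>] by blast
  have "log 2 (2 ^ (n * K) + 2) \<le> real (n * K)"
    using log_card_le_mult_dim[OF sphere_code_subset[OF sc S(3)]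
        vector_k_separating_subset[OF sep S(3)] S(1) K3] S(2)
    by (simp add: K_def)
  moreover have "log 2 ((2::real) ^ (n * K)) < log 2 (2 ^ (n * K) + 2)"
    by (rule log_less) auto
  ultimately have "log 2 ((2::real) ^ (n * K)) < real (n * K)" by linarith
  then show False by (simp add: log_nat_power)
qed

lemma log_card_le_rate_div:
  fixes C :: "(nat \<Rightarrow> real^'k) set"
  assumes sc: "sphere_code n C" and sep: "vector_k_separating n C" and fin: "finite C"
    and K3: "CARD('k) \<ge> 3" and \<theta>: "\<theta> < 1"
    and large: "(real CARD('k) - 1) * (real CARD('k) - 2) \<le> \<theta> * real (card C)"
      "2 * CARD('k) \<le> card C"
  shows "log 2 (real (card C))
    \<le> real n * ((fact CARD('k) / real CARD('k) ^ (CARD('k) - 1)) / (1 - \<theta>)) + 1"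
proof -
  define K where "K = CARD('k)"
  define M where "M = real (card C)"
  define c where "c = real K - 2"
  define \<rho> where "\<rho> = fact K / real K ^ (K - 1)"
  define L where "L = log 2 (M - c)"
  have "K \<ge> 3" "2 * real K \<le> M" using K3 large(2) by (simp_all add: K_def M_def)
  then have "0 \<le> c" "2 * c \<le> M" "M > 0" by (simp_all add: c_def)
  then have "1 \<le> M - c" using \<open>K \<ge> 3\<close> \<open>2 * real K \<le> M\<close> by (simp add: c_def)
  then have "L \<ge> 0" by (simp add: L_def)
  have "1 - \<theta> \<le> (1 - c / M) ^ (K - 1)"
    using \<open>K \<ge> 3\<close> large(1) \<open>0 \<le> c\<close> \<open>2 * c \<le> M\<close> \<open>M > 0\<close>
    by (intro one_minus_le_pow_one_minus_div) (simp_all add: K_def M_def c_def of_nat_diff)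
  then have "M ^ (K - 1) * ((1 - \<theta>) * L) \<le> M ^ (K - 1) * ((1 - c / M) ^ (K - 1) * L)"
    using \<open>L \<ge> 0\<close> \<open>M > 0\<close> by (intro mult_left_mono mult_right_mono) auto
  also have "\<dots> = (M - c) ^ (K - 1) * L"
  proof -
    have "M - c = M * (1 - c / M)" using \<open>M > 0\<close> by (simp add: field_simps)
    then show ?thesis by (simp add: power_mult_distrib)
  qed
  also have "\<dots> \<le> real n * \<rho> * M ^ (K - 1)"
  proof -
    have eq: "M - c = M - real K + 2" by (simp add: c_def)
    have "card C \<ge> CARD('k) - 1" using large(2) by simp
    from card_pow_mult_log_le[OF sc sep fin K3 this]
    show ?thesis unfolding K_def[symmetric] M_def[symmetric] \<rho>_def[symmetric] L_def eq .
  qed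
  also have "\<dots> = M ^ (K - 1) * (real n * \<rho>)" by simp
  finally have "(1 - \<theta>) * L \<le> real n * \<rho>"
    using \<open>M > 0\<close> by (simp only: mult_le_cancel_left_pos zero_less_power)
  then have "L \<le> real n * (\<rho> / (1 - \<theta>))" using \<theta> by (simp add: field_simps)
  moreover have "log 2 M \<le> 1 + L"
    unfolding L_def using \<open>M > 0\<close> \<open>2 * c \<le> M\<close> by (intro log2_le_one_plus_log2) auto
  ultimately show ?thesis by (simp add: M_def \<rho>_def K_def)
qed

lemma log_card_le_rate_plus_const:
  assumes K3: "CARD('k) \<ge> 3" and "\<epsilon> > 0"
  obtains c where "\<And>n (C :: (nat \<Rightarrow> real^'k) set). sphere_code n C \<Longrightarrow> vector_k_separating n C \<Longrightarrow>
    finite C \<Longrightarrow> C \<noteq> {} \<Longrightarrow>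
    log 2 (real (card C)) \<le> real n * (fact CARD('k) / real CARD('k) ^ (CARD('k) - 1) + \<epsilon>) + c"
proof -
  define K where "K = CARD('k)"
  define \<rho> where "\<rho> = fact K / real K ^ (K - 1)"
  define \<theta> where "\<theta> = \<epsilon> / (\<rho> + \<epsilon>)"
  define m where "m = nat \<lceil>(real K - 1) * (real K - 2) / \<theta>\<rceil> + 2 * K"
  have "\<rho> > 0" using K3 by (simp add: \<rho>_def K_def)
  then have "0 < \<theta>" "\<theta> < 1" "\<rho> / (1 - \<theta>) = \<rho> + \<epsilon>"
    using \<open>\<epsilon> > 0\<close> by (simp_all add: \<theta>_def field_simps)
  have "m \<ge> 1" using K3 by (simp add: m_def K_def)
  show thesis
  proof (rule that)
    fix n and C :: "(nat \<Rightarrow> real^'k) set"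
    assume sc: "sphere_code n C" and sep: "vector_k_separating n C" and fin: "finite C"
      and "C \<noteq> {}"
    then have "card C > 0" by (simp add: card_gt_0_iff)
    have "0 \<le> log 2 (real m)" using \<open>m \<ge> 1\<close> by simp
    have "log 2 (real (card C)) \<le> real n * (\<rho> + \<epsilon>) + (log 2 (real m) + 1)"
    proof (cases "card C < m")
      case True
      then have "log 2 (real (card C)) \<le> log 2 (real m)" using \<open>card C > 0\<close> by simp
      moreover have "0 \<le> real n * (\<rho> + \<epsilon>)" using \<open>\<rho> > 0\<close> \<open>\<epsilon> > 0\<close> by simp
      ultimately show ?thesis by linarith
    next
      case False
      then have "nat \<lceil>(real K - 1) * (real K - 2) / \<theta>\<rceil> \<le> card C"
        unfolding m_def by linarith
      then have "(real K - 1) * (real K - 2) \<le> \<theta> * real (card C)"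
        using \<open>0 < \<theta>\<close> by (simp add: pos_divide_le_eq mult.commute)
      moreover have "2 * K \<le> card C" using False by (simp add: m_def)
      ultimately have "log 2 (real (card C)) \<le> real n * (\<rho> / (1 - \<theta>)) + 1"
        using log_card_le_rate_div[OF sc sep fin K3 \<open>\<theta> < 1\<close>] by (simp add: K_def \<rho>_def)
      then show ?thesis using \<open>\<rho> / (1 - \<theta>) = \<rho> + \<epsilon>\<close> \<open>0 \<le> log 2 (real m)\<close> by simp
    qed
    then show "log 2 (real (card C))
        \<le> real n * (fact CARD('k) / real CARD('k) ^ (CARD('k) - 1) + \<epsilon>) + (log 2 (real m) + 1)"
      by (simp add: \<rho>_def K_def)
  qed
qed

theorem theorem2:
  assumes "CARD('k) \<ge> 3"
  shows "\<forall>\<epsilon>>0. \<exists>N. \<forall>n\<ge>N. \<forall>C :: (nat \<Rightarrow> real^'k) set.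
           sphere_code n C \<and> vector_k_separating n C \<longrightarrow>
             finite C \<and>
             (C \<noteq> {} \<longrightarrow> log 2 (real (card C)) / real n
                 \<le> real (fact CARD('k)) / real CARD('k) ^ (CARD('k) - 1) + \<epsilon>)"
proof (intro allI impI)
  fix \<epsilon> :: real assume "\<epsilon> > 0"
  define \<rho> :: real where "\<rho> = fact CARD('k) / real CARD('k) ^ (CARD('k) - 1)"
  obtain c where c: "\<And>n (C :: (nat \<Rightarrow> real^'k) set). sphere_code n C \<Longrightarrow>
      vector_k_separating n C \<Longrightarrow> finite C \<Longrightarrow> C \<noteq> {} \<Longrightarrow>
      log 2 (real (card C)) \<le> real n * (\<rho> + \<epsilon> / 2) + c"
    using log_card_le_rate_plus_const[OF assms, of "\<epsilon> / 2"] \<open>\<epsilon> > 0\<close> unfolding \<rho>_def by auto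
  show "\<exists>N. \<forall>n\<ge>N. \<forall>C :: (nat \<Rightarrow> real^'k) set. sphere_code n C \<and> vector_k_separating n C \<longrightarrow>
      finite C \<and> (C \<noteq> {} \<longrightarrow> log 2 (real (card C)) / real n
        \<le> real (fact CARD('k)) / real CARD('k) ^ (CARD('k) - 1) + \<epsilon>)"
  proof (intro exI[of _ "nat \<lceil>2 * c / \<epsilon>\<rceil> + 1"] allI impI conjI)
    fix n and C :: "(nat \<Rightarrow> real^'k) set"
    assume n: "nat \<lceil>2 * c / \<epsilon>\<rceil> + 1 \<le> n" and "sphere_code n C \<and> vector_k_separating n C"
    then have sc: "sphere_code n C" and sep: "vector_k_separating n C" by auto
    show fin: "finite C" by (rule vector_k_separating_finite[OF sc sep assms])
    assume "C \<noteq> {}"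
    have "n > 0" "nat \<lceil>2 * c / \<epsilon>\<rceil> \<le> n" using n by linarith+
    then have "c \<le> real n * (\<epsilon> / 2)" using \<open>\<epsilon> > 0\<close> by (simp add: field_simps)
    then have "log 2 (real (card C)) \<le> real n * (\<rho> + \<epsilon>)"
      using c[OF sc sep fin \<open>C \<noteq> {}\<close>] by (simp add: algebra_simps)
    then show "log 2 (real (card C)) / real n \<le> real (fact CARD('k)) / real CARD('k) ^ (CARD('k) - 1) + \<epsilon>"
      using \<open>n > 0\<close> by (simp add: \<rho>_def divide_le_eq mult.commute)
  qed
qed

end
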